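(* Suppose $T\in\mathcal B(\mathcal H)$ is quasitriangular and $\{P_n\}$ is a filtration with $\|(I-P_n)TP_n\|\to0$. Let $T_n=P_nT|_{P_n\mathcal H}$. Then $j_{T_n}\to j_T$ uniformly on $\mathbb C$.
   Context: $\mathcal H$ is a complex separable Hilbert space. For an operator $A$ on a Hilbert space $\mathcal K$, $j_A(z)=\inf\{\|(A-z)h\|:h\in\mathcal K,\|h\|=1\}$. A filtration is a sequence $\{P_n\}$ of finite-rank orthogonal projections with $\operatorname{Ran}P_n\subseteq\operatorname{Ran}P_{n+1}$ and $\bigcup_n\operatorname{Ran}P_n$ dense. $T$ is quasitriangular if there is a filtration $\{P_n\}$ with $\|(I-P_n)TP_n\|\to0$. *)

theory Defs
  imports "HOL-Analysis.Analysis"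
begin

text \<open>A complex Hilbert space is modelled as a real Hilbert space (real_inner, complete)
  together with a complex structure J (multiplication by the imaginary unit),
  real inner product = real part of the complex inner product.\<close>

definition complex_structure :: "('a::real_inner \<Rightarrow> 'a) \<Rightarrow> bool" where
  "complex_structure J \<longleftrightarrow> linear J \<and> (\<forall>x. J (J x) = - x) \<and>
     (\<forall>x y. inner (J x) (J y) = inner x y)"

definition cscale :: "('a::real_vector \<Rightarrow> 'a) \<Rightarrow> complex \<Rightarrow> 'a \<Rightarrow> 'a" where
  "cscale J z x = Re z *\<^sub>R x + Im z *\<^sub>R J x"

text \<open>bounded complex-linear operators\<close>
definition bounded_op :: "('a::real_normed_vector \<Rightarrow> 'a) \<Rightarrow> ('a \<Rightarrow> 'a) \<Rightarrow> bool" where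
  "bounded_op J T \<longleftrightarrow> bounded_linear T \<and> (\<forall>x. T (J x) = J (T x))"

definition fin_rank_orth_proj :: "('a::real_inner \<Rightarrow> 'a) \<Rightarrow> ('a \<Rightarrow> 'a) \<Rightarrow> bool" where
  "fin_rank_orth_proj J P \<longleftrightarrow> bounded_op J P \<and> (\<forall>x. P (P x) = P x) \<and>
     (\<forall>x y. inner (P x) y = inner x (P y)) \<and> (\<exists>B. finite B \<and> range P \<subseteq> span B)"

definition filtration :: "('a::real_inner \<Rightarrow> 'a) \<Rightarrow> (nat \<Rightarrow> 'a \<Rightarrow> 'a) \<Rightarrow> bool" where
  "filtration J P \<longleftrightarrow> (\<forall>n. fin_rank_orth_proj J (P n)) \<and>
     (\<forall>n. range (P n) \<subseteq> range (P (Suc n))) \<and> closure (\<Union>n. range (P n)) = UNIV"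

definition quasitriangular :: "('a::real_inner \<Rightarrow> 'a) \<Rightarrow> ('a \<Rightarrow> 'a) \<Rightarrow> bool" where
  "quasitriangular J T \<longleftrightarrow> (\<exists>P. filtration J P \<and>
     (\<lambda>n. onorm (\<lambda>x. T (P n x) - P n (T (P n x)))) \<longlonglongrightarrow> 0)"

text \<open>j_A(z) for an operator A acting on the (closed) subspace K\<close>
definition jfun :: "('a::real_normed_vector \<Rightarrow> 'a) \<Rightarrow> 'a set \<Rightarrow> ('a \<Rightarrow> 'a) \<Rightarrow> complex \<Rightarrow> real" where
  "jfun J K A z = Inf {norm (A h - cscale J z h) | h. h \<in> K \<and> norm h = 1}"

end

theory Submission
  imports Defs
begin

text \<open>On \<open>Ran P\<^sub>n\<close> the operators \<open>T\<close> and \<open>T\<^sub>n\<close> differ by \<open>(I - P\<^sub>n) T P\<^sub>n\<close>, which gives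
  \<open>j\<^sub>T \<le> j\<^sub>T\<^sub>n + \<parallel>(I - P\<^sub>n) T P\<^sub>n\<parallel>\<close>. Conversely, for a unit vector \<open>h\<close> the quantity
  \<open>\<parallel>(T - z) h\<parallel>\<^sup>2 = \<parallel>T h\<parallel>\<^sup>2 - 2 Re (conj z \<langle>T h, h\<rangle>) + \<bar>z\<bar>\<^sup>2\<close> depends only on the profile
  \<open>(\<parallel>T h\<parallel>\<^sup>2, \<langle>T h, h\<rangle>)\<close>, and \<open>\<parallel>(T - z) h\<parallel>\<close> is uniformly continuous in the profile, uniformly
  in \<open>z\<close> (for large \<open>\<bar>z\<bar>\<close> because then \<open>\<parallel>(T - z) h\<parallel> \<ge> \<bar>z\<bar> - \<parallel>T\<parallel>\<close> is large). The profiles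
  of unit vectors form a bounded, hence totally bounded, set; so finitely many unit vectors
  realise all profiles up to \<open>\<eta>\<close>, and for large \<open>n\<close> so do their normalised images under \<open>P\<^sub>n\<close>.
  Since compressing to \<open>Ran P\<^sub>n\<close> can only decrease \<open>\<parallel>(T - z) u\<parallel>\<close>, this gives
  \<open>j\<^sub>T\<^sub>n \<le> j\<^sub>T + \<delta>\<close> for all \<open>z\<close> at once.\<close>

lemma complex_structure_inner_self:
  assumes "complex_structure J"
  shows "inner (J x) x = 0"
proof -
  have "inner (J (J x)) (J x) = inner (J x) x" "J (J x) = - x"
    using assms unfolding complex_structure_def by blast+
  then show ?thesis
    by (simp add: inner_commute)
qed

lemma complex_structure_norm:
  assumes "complex_structure J"
  shows "norm (J x) = norm x"
  using assms by (simp add: complex_structure_def norm_eq_sqrt_inner)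

lemma bounded_linear_complex_structure:
  assumes "complex_structure J"
  shows "bounded_linear J"
proof -
  interpret linear J
    using assms by (simp add: complex_structure_def)
  show ?thesis
    by unfold_locales (rule exI[of _ 1], simp add: complex_structure_norm[OF assms])
qed

lemma norm_minus_cscale_sq:
  assumes "complex_structure J" "norm h = 1"
  shows "(norm (y - cscale J z h))\<^sup>2
    = (norm y)\<^sup>2 - 2 * (Re z * inner y h + Im z * inner y (J h)) + (cmod z)\<^sup>2"
proof -
  have "inner (J h) (J h) = 1" "inner h h = 1" "inner (J h) h = 0"
    using assms complex_structure_norm[OF assms(1), of h] complex_structure_inner_self[OF assms(1)]
    by (simp_all add: power2_norm_eq_inner[symmetric])
  then show ?thesis
    by (simp only: cmod_power2 power2_norm_eq_inner)
      (simp add: cscale_def inner_diff_left inner_diff_right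
        inner_add_left inner_add_right inner_commute power2_eq_square algebra_simps)
qed

lemma norm_minus_cscale_ge:
  assumes "complex_structure J" "norm h = 1"
  shows "norm (y - cscale J z h) \<ge> cmod z - norm y"
proof -
  have "(norm (cscale J z h))\<^sup>2 = (cmod z)\<^sup>2"
    using norm_minus_cscale_sq[OF assms, of 0] by simp
  then have "norm (cscale J z h) = cmod z"
    by (simp add: power2_eq_iff_nonneg)
  then show ?thesis
    by (metis norm_minus_commute norm_triangle_ineq2)
qed

lemma bounded_linear_fin_rank_orth_proj:
  assumes "fin_rank_orth_proj J P"
  shows "bounded_linear P"
  using assms by (simp add: fin_rank_orth_proj_def bounded_op_def)

lemma fin_rank_orth_proj_norm_le:
  assumes "fin_rank_orth_proj J P"
  shows "norm (P x) \<le> norm x"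
proof -
  have "(norm (P x))\<^sup>2 = inner x (P (P x))"
    using assms by (simp add: fin_rank_orth_proj_def power2_norm_eq_inner)
  also have "\<dots> = inner x (P x)"
    using assms by (simp add: fin_rank_orth_proj_def)
  also have "\<dots> \<le> norm x * norm (P x)"
    by (rule norm_cauchy_schwarz)
  finally show ?thesis
    by (cases "P x = 0") (auto simp: power2_eq_square)
qed

lemma fin_rank_orth_proj_fixes_range:
  assumes "fin_rank_orth_proj J P" "u \<in> range P"
  shows "P u = u"
  using assms by (auto simp: fin_rank_orth_proj_def)

lemma fin_rank_orth_proj_cscale:
  assumes "fin_rank_orth_proj J P"
  shows "P (cscale J z x) = cscale J z (P x)"
proof -
  interpret bounded_linear P
    using assms by (rule bounded_linear_fin_rank_orth_proj)
  show ?thesis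
    using assms by (simp add: fin_rank_orth_proj_def bounded_op_def cscale_def add scale)
qed

lemma filtration_tendsto:
  assumes "filtration J P"
  shows "(\<lambda>n. P n x) \<longlonglongrightarrow> x"
proof (rule LIMSEQ_I)
  fix e :: real
  assume "e > 0"
  have proj: "fin_rank_orth_proj J (P n)" for n
    using assms by (simp add: filtration_def)
  have "x \<in> closure (\<Union>n. range (P n))"
    using assms by (simp add: filtration_def)
  then obtain y where "y \<in> (\<Union>n. range (P n))" and close: "dist y x < e / 2"
    using closure_approachable \<open>e > 0\<close> by (metis half_gt_zero)
  then obtain m w where y: "y = P m w"
    by blast
  have "norm (P n x - x) < e" if "m \<le> n" for n
  proof -
    interpret bounded_linear "P n"
      using proj by (rule bounded_linear_fin_rank_orth_proj)
    have "range (P m) \<subseteq> range (P n)"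
      using lift_Suc_mono_le[of "\<lambda>n. range (P n)", OF _ \<open>m \<le> n\<close>] assms
      unfolding filtration_def by blast
    then have "P n y = y"
      using fin_rank_orth_proj_fixes_range[OF proj] y by blast
    then have "P n x - x = P n (x - y) + (y - x)"
      by (simp add: diff)
    then have "norm (P n x - x) \<le> norm (P n (x - y)) + norm (y - x)"
      by (metis norm_triangle_ineq)
    also have "\<dots> \<le> norm (x - y) + norm (y - x)"
      using fin_rank_orth_proj_norm_le[OF proj] by (rule add_right_mono)
    finally show ?thesis
      using close by (simp add: dist_norm norm_minus_commute)
  qed
  then show "\<exists>no. \<forall>n\<ge>no. norm (P n x - x) < e"
    by blast
qed

text \<open>The last two components are the real and imaginary parts of the complex inner product
  \<open>\<langle>T h, h\<rangle>\<close>.\<close>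

definition op_profile :: "('a::real_inner \<Rightarrow> 'a) \<Rightarrow> ('a \<Rightarrow> 'a) \<Rightarrow> 'a \<Rightarrow> real \<times> real \<times> real" where
  "op_profile J T h = ((norm (T h))\<^sup>2, inner (T h) h, inner (T h) (J h))"

lemma bounded_op_profile_sphere:
  assumes "complex_structure J" "bounded_linear T"
  shows "bounded (op_profile J T ` sphere 0 1)"
proof (rule bounded_subset)
  let ?M = "onorm T"
  show "bounded (cball 0 (?M\<^sup>2) \<times> cball 0 ?M \<times> cball (0::real) ?M)"
    by (intro bounded_Times bounded_cball)
  have "op_profile J T h \<in> cball 0 (?M\<^sup>2) \<times> cball 0 ?M \<times> cball 0 ?M" if "norm h = 1" for h
  proof -
    have "norm (T h) \<le> ?M"
      using onorm[OF assms(2), of h] that by simp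
    moreover have "\<bar>inner (T h) h\<bar> \<le> norm (T h)" "\<bar>inner (T h) (J h)\<bar> \<le> norm (T h)"
      using Cauchy_Schwarz_ineq2[of "T h" h] Cauchy_Schwarz_ineq2[of "T h" "J h"] that
      by (simp_all add: complex_structure_norm[OF assms(1)])
    ultimately show ?thesis
      by (auto simp: op_profile_def power_mono)
  qed
  then show "op_profile J T ` sphere 0 1 \<subseteq> cball 0 (?M\<^sup>2) \<times> cball 0 ?M \<times> cball 0 ?M"
    by (simp add: image_subset_iff)
qed

lemma tendsto_op_profile:
  assumes "complex_structure J" "bounded_linear T" "X \<longlonglongrightarrow> x"
  shows "(\<lambda>n. op_profile J T (X n)) \<longlonglongrightarrow> op_profile J T x"
  unfolding op_profile_def
  by (intro tendsto_Pair tendsto_power tendsto_norm tendsto_inner assms(3)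
      bounded_linear.tendsto[OF assms(2)] bounded_linear.tendsto[OF bounded_linear_complex_structure[OF assms(1)]])

lemma norm_minus_cscale_sq_le_profile:
  assumes "complex_structure J" "norm u = 1" "norm h = 1"
    and "dist (op_profile J T u) (op_profile J T h) < \<eta>"
  shows "(norm (T u - cscale J z u))\<^sup>2 \<le> (norm (T h - cscale J z h))\<^sup>2 + \<eta> * (1 + 4 * cmod z)"
proof -
  let ?pu = "op_profile J T u" and ?ph = "op_profile J T h"
  have snd_close: "dist (snd ?pu) (snd ?ph) < \<eta>"
    using dist_snd_le[of ?pu ?ph] assms(4) by linarith
  have a: "\<bar>(norm (T u))\<^sup>2 - (norm (T h))\<^sup>2\<bar> < \<eta>"
    using dist_fst_le[of ?pu ?ph] assms(4) by (simp add: op_profile_def dist_real_def)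
  have b: "\<bar>inner (T u) u - inner (T h) h\<bar> < \<eta>"
    using dist_fst_le[of "snd ?pu" "snd ?ph"] snd_close by (simp add: op_profile_def dist_real_def)
  have c: "\<bar>inner (T u) (J u) - inner (T h) (J h)\<bar> < \<eta>"
    using dist_snd_le[of "snd ?pu" "snd ?ph"] snd_close by (simp add: op_profile_def dist_real_def)
  have "\<bar>Re z * (inner (T u) u - inner (T h) h)\<bar> \<le> cmod z * \<eta>"
    unfolding abs_mult using b abs_Re_le_cmod by (intro mult_mono) auto
  moreover have "\<bar>Im z * (inner (T u) (J u) - inner (T h) (J h))\<bar> \<le> cmod z * \<eta>"
    unfolding abs_mult using c abs_Im_le_cmod by (intro mult_mono) auto
  moreover have "(norm (T u - cscale J z u))\<^sup>2 - (norm (T h - cscale J z h))\<^sup>2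
      = ((norm (T u))\<^sup>2 - (norm (T h))\<^sup>2) - 2 * (Re z * (inner (T u) u - inner (T h) h))
        - 2 * (Im z * (inner (T u) (J u) - inner (T h) (J h)))"
    unfolding norm_minus_cscale_sq[OF assms(1,2)] norm_minus_cscale_sq[OF assms(1,3)]
    by (simp add: algebra_simps)
  ultimately show ?thesis
    using a by (simp add: algebra_simps abs_le_iff abs_less_iff)
qed

lemma le_add_of_sq_le_sq_add:
  fixes a b r M \<eta> \<delta> :: real
  assumes "a \<ge> 0" "b \<ge> 0" "r \<ge> 0" "M \<ge> 0" "\<delta> > 0" "\<eta> \<ge> 0"
    and "a\<^sup>2 \<le> b\<^sup>2 + \<eta> * (1 + 4 * r)" "b \<ge> r - M"
    and "\<eta> \<le> \<delta> / 4" "\<eta> \<le> \<delta>\<^sup>2 / (8 * M + 5)"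
  shows "a \<le> b + \<delta>"
proof -
  have "\<eta> * (1 + 4 * r) \<le> 2 * \<delta> * b + \<delta>\<^sup>2"
  proof (cases "r \<le> 2 * M + 1")
    case True
    have "\<eta> * (1 + 4 * r) \<le> \<eta> * (8 * M + 5)"
      using True assms(6) by (intro mult_left_mono) auto
    also have "\<dots> \<le> \<delta>\<^sup>2"
      using assms(4,10) by (simp add: pos_le_divide_eq mult.commute)
    moreover have "0 \<le> 2 * \<delta> * b"
      using assms(2,5) by simp
    ultimately show ?thesis
      by linarith
  next
    case False
    then have "2 * b \<ge> r + 1"
      using assms(8) by linarith
    from mult_left_mono[OF this, of \<delta>] have "2 * \<delta> * b \<ge> \<delta> * (r + 1)"
      using assms(5) by (simp add: algebra_simps)
    moreover have "\<eta> * (1 + 4 * r) \<le> \<delta> / 4 * (4 * (r + 1))"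
      using assms(3,6,9) by (intro mult_mono) auto
    moreover have "\<delta> / 4 * (4 * (r + 1)) = \<delta> * (r + 1)" "0 \<le> \<delta>\<^sup>2"
      by simp_all
    ultimately show ?thesis
      by linarith
  qed
  then have "a\<^sup>2 \<le> (b + \<delta>)\<^sup>2"
    using assms(7) by (simp add: power2_sum algebra_simps)
  then show ?thesis
    by (rule power2_le_imp_le) (use assms(2,5) in linarith)
qed

lemma op_profile_close_imp_norm_minus_cscale_le:
  assumes "complex_structure J" "bounded_linear T" "\<delta> > 0"
  obtains \<eta> where "\<eta> > 0"
    "\<And>z u h. norm u = 1 \<Longrightarrow> norm h = 1 \<Longrightarrow> dist (op_profile J T u) (op_profile J T h) < \<eta> \<Longrightarrow>
       norm (T u - cscale J z u) \<le> norm (T h - cscale J z h) + \<delta>"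
proof -
  let ?M = "onorm T"
  define \<eta> where "\<eta> = min (\<delta> / 4) (\<delta>\<^sup>2 / (8 * ?M + 5))"
  have M: "?M \<ge> 0"
    using onorm_pos_le[OF assms(2)] .
  have \<eta>: "\<eta> > 0" "\<eta> \<le> \<delta> / 4" "\<eta> \<le> \<delta>\<^sup>2 / (8 * ?M + 5)"
    using M assms(3) unfolding \<eta>_def by (simp_all only: min.cobounded1 min.cobounded2) simp
  have "norm (T u - cscale J z u) \<le> norm (T h - cscale J z h) + \<delta>"
    if u: "norm u = 1" and h: "norm h = 1"
      and close: "dist (op_profile J T u) (op_profile J T h) < \<eta>" for z u h
  proof (rule le_add_of_sq_le_sq_add[where r = "cmod z" and M = ?M and \<eta> = \<eta>])
    have "norm (T h) \<le> ?M"
      using onorm[OF assms(2), of h] h by simp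
    then show "norm (T h - cscale J z h) \<ge> cmod z - ?M"
      using norm_minus_cscale_ge[OF assms(1) h, where y = "T h" and z = z] by linarith
  qed (use norm_minus_cscale_sq_le_profile[OF assms(1) u h close, of z] M assms(3) \<eta> in auto)
  with \<eta>(1) show ?thesis
    using that by blast
qed

lemma bounded_image_finite_net:
  fixes f :: "'a \<Rightarrow> 'b::heine_borel"
  assumes "bounded (f ` S)" "e > 0"
  obtains H where "finite H" "H \<subseteq> S" "\<And>x. x \<in> S \<Longrightarrow> \<exists>k\<in>H. dist (f x) (f k) < e"
proof -
  have "Met_TC.mtotally_bounded (closure (f ` S))"
    using assms(1)
    by (intro Met_TC.compactin_imp_mtotally_bounded) (simp add: compact_closure compactin_euclidean_iff)
  then have "Met_TC.mtotally_bounded (f ` S)"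
    by (rule Met_TC.mtotally_bounded_subset) (rule closure_subset)
  then obtain K where K: "finite K" "K \<subseteq> f ` S" "f ` S \<subseteq> (\<Union>c\<in>K. ball c e)"
    using assms(2) unfolding Met_TC.mtotally_bounded_def by (metis mball_eq_ball)
  then obtain H where H: "finite H" "H \<subseteq> S" "K = f ` H"
    by (meson finite_subset_image)
  moreover have "\<exists>k\<in>H. dist (f x) (f k) < e" if "x \<in> S" for x
  proof -
    have "f x \<in> (\<Union>k\<in>H. ball (f k) e)"
      using K(3) H(3) that by blast
    then show ?thesis
      by (auto simp: dist_commute)
  qed
  ultimately show ?thesis
    using that by blast
qed

lemma eventually_normalized_compression_op_profile_close:
  assumes "complex_structure J" "filtration J P" "bounded_linear T" "norm k = 1" "\<eta> > 0"
  shows "\<forall>\<^sub>F n in sequentially. \<exists>u\<in>range (P n) \<inter> sphere 0 1.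
           dist (op_profile J T u) (op_profile J T k) < \<eta>"
proof -
  define w where "w n = (1 / norm (P n k)) *\<^sub>R P n k" for n
  have in_range: "w n \<in> range (P n)" for n
    using assms(2) unfolding filtration_def w_def
    by (metis bounded_linear_fin_rank_orth_proj bounded_linear.linear linear_scale rangeI)
  have Pk: "(\<lambda>n. P n k) \<longlonglongrightarrow> k"
    using filtration_tendsto[OF assms(2)] .
  then have norm_Pk: "(\<lambda>n. norm (P n k)) \<longlonglongrightarrow> 1"
    using tendsto_norm assms(4) by fastforce
  then have "\<forall>\<^sub>F n in sequentially. P n k \<noteq> 0"
    using order_tendstoD(1)[OF norm_Pk, of 0] by (auto elim: eventually_mono)
  moreover have "w \<longlonglongrightarrow> k"
    using tendsto_scaleR[OF tendsto_divide[OF tendsto_const norm_Pk] Pk, of 1] by (simp add: w_def[abs_def])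
  then have "\<forall>\<^sub>F n in sequentially. dist (op_profile J T (w n)) (op_profile J T k) < \<eta>"
    using assms(5) by (intro tendstoD tendsto_op_profile[OF assms(1,3)])
  ultimately show ?thesis
  proof eventually_elim
    case (elim n)
    then have "w n \<in> sphere 0 1"
      by (simp add: w_def)
    with in_range elim(2) show ?case
      by blast
  qed
qed

lemma eventually_range_approximates_op_profile:
  assumes "complex_structure J" "filtration J P" "bounded_linear T" "\<eta> > 0"
  shows "\<forall>\<^sub>F n in sequentially. \<forall>h\<in>sphere 0 1. \<exists>u\<in>range (P n) \<inter> sphere 0 1.
           dist (op_profile J T u) (op_profile J T h) < \<eta>"
proof -
  obtain H where H: "finite H" "H \<subseteq> sphere 0 1"
    and net: "\<And>h. h \<in> sphere 0 1 \<Longrightarrow> \<exists>k\<in>H. dist (op_profile J T h) (op_profile J T k) < \<eta> / 2"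
    using bounded_image_finite_net[OF bounded_op_profile_sphere[OF assms(1,3)], of "\<eta> / 2"] assms(4)
    by auto
  have "\<forall>k\<in>H. \<forall>\<^sub>F n in sequentially. \<exists>u\<in>range (P n) \<inter> sphere 0 1.
          dist (op_profile J T u) (op_profile J T k) < \<eta> / 2"
  proof
    fix k
    assume "k \<in> H"
    then show "\<forall>\<^sub>F n in sequentially. \<exists>u\<in>range (P n) \<inter> sphere 0 1.
        dist (op_profile J T u) (op_profile J T k) < \<eta> / 2"
      using H(2) assms(4) by (intro eventually_normalized_compression_op_profile_close[OF assms(1-3)]) auto
  qed
  then have "\<forall>\<^sub>F n in sequentially. \<forall>k\<in>H. \<exists>u\<in>range (P n) \<inter> sphere 0 1.
               dist (op_profile J T u) (op_profile J T k) < \<eta> / 2"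
    using H(1) by (simp add: eventually_ball_finite_distrib)
  then show ?thesis
  proof eventually_elim
    case (elim n)
    show ?case
    proof
      fix h :: 'a
      assume "h \<in> sphere 0 1"
      then obtain k where "k \<in> H" "dist (op_profile J T h) (op_profile J T k) < \<eta> / 2"
        using net by blast
      with elim show "\<exists>u\<in>range (P n) \<inter> sphere 0 1. dist (op_profile J T u) (op_profile J T h) < \<eta>"
        by (meson dist_triangle_half_l)
    qed
  qed
qed

lemma eventually_range_approximates_norm_minus_cscale:
  fixes T :: "'a::real_inner \<Rightarrow> 'a"
  assumes "complex_structure J" "filtration J P" "bounded_linear T" "\<delta> > 0"
  shows "\<forall>\<^sub>F n in sequentially. \<forall>z h. norm h = 1 \<longrightarrow>
           (\<exists>u\<in>range (P n). norm u = 1 \<and> norm (T u - cscale J z u) \<le> norm (T h - cscale J z h) + \<delta>)"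
proof -
  obtain \<eta> where "\<eta> > 0" and close:
    "\<And>z u h. norm u = 1 \<Longrightarrow> norm h = 1 \<Longrightarrow> dist (op_profile J T u) (op_profile J T h) < \<eta> \<Longrightarrow>
       norm (T u - cscale J z u) \<le> norm (T h - cscale J z h) + \<delta>"
    using op_profile_close_imp_norm_minus_cscale_le[OF assms(1,3,4)] by blast
  show ?thesis
    using eventually_range_approximates_op_profile[OF assms(1-3) \<open>\<eta> > 0\<close>]
  proof eventually_elim
    case (elim n)
    show ?case
    proof (intro allI impI)
      fix z :: complex and h :: 'a
      assume h: "norm h = 1"
      then have "h \<in> sphere 0 1"
        by simp
      with elim obtain u where "u \<in> range (P n) \<inter> sphere 0 1"
        and "dist (op_profile J T u) (op_profile J T h) < \<eta>"
        by blast
      then show "\<exists>u\<in>range (P n). norm u = 1 \<and>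
          norm (T u - cscale J z u) \<le> norm (T h - cscale J z h) + \<delta>"
        using close[of u h z] h by auto
    qed
  qed
qed

lemma bounded_linear_off_diagonal:
  assumes "bounded_linear P" "bounded_linear T"
  shows "bounded_linear (\<lambda>x. T (P x) - P (T (P x)))"
proof -
  have TP: "bounded_linear (\<lambda>x. T (P x))"
    using assms(2,1) by (rule bounded_linear_compose)
  then have "bounded_linear (\<lambda>x. P (T (P x)))"
    using assms(1) bounded_linear_compose by blast
  with TP show ?thesis
    by (rule bounded_linear_sub)
qed

lemma jfun_le_jfun_compression_add:
  assumes "fin_rank_orth_proj J P" "bounded_linear T" "\<exists>u\<in>range P. norm u = 1"
  shows "jfun J UNIV T z \<le> jfun J (range P) (\<lambda>h. P (T h)) z + onorm (\<lambda>x. T (P x) - P (T (P x)))"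
proof -
  let ?\<epsilon> = "onorm (\<lambda>x. T (P x) - P (T (P x)))"
  have P: "bounded_linear P"
    using assms(1) by (rule bounded_linear_fin_rank_orth_proj)
  note bound = onorm[OF bounded_linear_off_diagonal[OF P assms(2)]]
  have "jfun J UNIV T z - ?\<epsilon> \<le> norm (P (T h) - cscale J z h)"
    if h: "h \<in> range P" "norm h = 1" for h
  proof -
    have "jfun J UNIV T z \<le> norm (T h - cscale J z h)"
      unfolding jfun_def using h(2) by (intro cInf_lower) (auto intro!: bdd_belowI[of _ 0])
    also have "T h - cscale J z h = (P (T h) - cscale J z h) + (T (P h) - P (T (P h)))"
      using fin_rank_orth_proj_fixes_range[OF assms(1) h(1)] by simp
    also have "norm \<dots> \<le> norm (P (T h) - cscale J z h) + norm (T (P h) - P (T (P h)))"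
      by (rule norm_triangle_ineq)
    also have "\<dots> \<le> norm (P (T h) - cscale J z h) + ?\<epsilon>"
      using bound[of h] h(2) by simp
    finally show ?thesis
      by simp
  qed
  moreover have "{norm (P (T h) - cscale J z h) |h. h \<in> range P \<and> norm h = 1} \<noteq> {}"
    using assms(3) by auto
  ultimately have "jfun J UNIV T z - ?\<epsilon> \<le> jfun J (range P) (\<lambda>h. P (T h)) z"
    unfolding jfun_def[of J "range P"] by (intro cInf_greatest) auto
  then show ?thesis
    by simp
qed

lemma jfun_compression_le_jfun_add:
  fixes T :: "'a::real_inner \<Rightarrow> 'a"
  assumes "fin_rank_orth_proj J P" "\<exists>h::'a. norm h = 1"
    and approx: "\<And>h. norm h = 1 \<Longrightarrow>
      \<exists>u\<in>range P. norm u = 1 \<and> norm (T u - cscale J z u) \<le> norm (T h - cscale J z h) + \<delta>"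
  shows "jfun J (range P) (\<lambda>h. P (T h)) z \<le> jfun J UNIV T z + \<delta>"
proof -
  have P: "bounded_linear P"
    using assms(1) by (rule bounded_linear_fin_rank_orth_proj)
  have "jfun J (range P) (\<lambda>h. P (T h)) z - \<delta> \<le> norm (T h - cscale J z h)"
    if h: "norm h = 1" for h
  proof -
    obtain u where u: "u \<in> range P" "norm u = 1"
      and le: "norm (T u - cscale J z u) \<le> norm (T h - cscale J z h) + \<delta>"
      using approx[OF h] by auto
    have "jfun J (range P) (\<lambda>h. P (T h)) z \<le> norm (P (T u) - cscale J z u)"
      unfolding jfun_def using u by (intro cInf_lower) (auto intro!: bdd_belowI[of _ 0])
    also have "P (T u) - cscale J z u = P (T u - cscale J z u)"
      using fin_rank_orth_proj_cscale[OF assms(1)] fin_rank_orth_proj_fixes_range[OF assms(1) u(1)]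
      by (simp add: linear_diff[OF bounded_linear.linear[OF P]])
    also have "norm \<dots> \<le> norm (T u - cscale J z u)"
      by (rule fin_rank_orth_proj_norm_le[OF assms(1)])
    finally show ?thesis
      using le by simp
  qed
  moreover have "{norm (T h - cscale J z h) |h. h \<in> UNIV \<and> norm h = 1} \<noteq> {}"
    using assms(2) by auto
  ultimately have "jfun J (range P) (\<lambda>h. P (T h)) z - \<delta> \<le> jfun J UNIV T z"
    unfolding jfun_def[of J UNIV] by (intro cInf_greatest) auto
  then show ?thesis
    by simp
qed

lemma dist_jfun_compression_le:
  fixes T :: "'a::real_inner \<Rightarrow> 'a"
  assumes "fin_rank_orth_proj J P" "bounded_linear T"
    and approx: "\<And>h. norm h = 1 \<Longrightarrow>
      \<exists>u\<in>range P. norm u = 1 \<and> norm (T u - cscale J z u) \<le> norm (T h - cscale J z h) + \<delta>"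
  shows "dist (jfun J (range P) (\<lambda>h. P (T h)) z) (jfun J UNIV T z)
           \<le> max (onorm (\<lambda>x. T (P x) - P (T (P x)))) \<delta>"
proof (cases "\<exists>h::'a. norm h = 1")
  case True
  then have "\<exists>u\<in>range P. norm u = 1"
    using approx by blast
  with assms(1,2) have "jfun J UNIV T z
      \<le> jfun J (range P) (\<lambda>h. P (T h)) z + onorm (\<lambda>x. T (P x) - P (T (P x)))"
    by (rule jfun_le_jfun_compression_add)
  moreover have "jfun J (range P) (\<lambda>h. P (T h)) z \<le> jfun J UNIV T z + \<delta>"
    using assms(1) True approx by (rule jfun_compression_le_jfun_add)
  ultimately show ?thesis
    by (auto simp: dist_real_def abs_le_iff le_max_iff_disj)
next
  case False
  have "bounded_linear P"
    using assms(1) by (rule bounded_linear_fin_rank_orth_proj)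
  with False show ?thesis
    unfolding jfun_def by (simp add: onorm_pos_le bounded_linear_off_diagonal assms(2) le_max_iff_disj)
qed

theorem theorem3p5:
  fixes J :: "'a::{real_inner, complete_space} \<Rightarrow> 'a"
    and T :: "'a \<Rightarrow> 'a"
    and P :: "nat \<Rightarrow> 'a \<Rightarrow> 'a"
  assumes "complex_structure J"
    and "\<exists>D::'a set. countable D \<and> closure D = UNIV"
    and "bounded_op J T"
    and "quasitriangular J T"
    and "filtration J P"
    and "(\<lambda>n. onorm (\<lambda>x. T (P n x) - P n (T (P n x)))) \<longlonglongrightarrow> 0"
  shows "uniform_limit UNIV (\<lambda>n z. jfun J (range (P n)) (\<lambda>h. P n (T h)) z)
           (jfun J UNIV T) sequentially"
proof (rule uniform_limitI)
  fix e :: real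
  assume "e > 0"
  have T: "bounded_linear T"
    using assms(3) by (simp add: bounded_op_def)
  have "\<forall>\<^sub>F n in sequentially. onorm (\<lambda>x. T (P n x) - P n (T (P n x))) < e"
    using order_tendstoD(2)[OF assms(6) \<open>e > 0\<close>] .
  moreover have "\<forall>\<^sub>F n in sequentially. \<forall>z h. norm h = 1 \<longrightarrow> (\<exists>u\<in>range (P n). norm u = 1 \<and>
      norm (T u - cscale J z u) \<le> norm (T h - cscale J z h) + e / 2)"
    using eventually_range_approximates_norm_minus_cscale[OF assms(1,5) T] \<open>e > 0\<close> by simp
  ultimately show "\<forall>\<^sub>F n in sequentially. \<forall>z\<in>UNIV.
      dist (jfun J (range (P n)) (\<lambda>h. P n (T h)) z) (jfun J UNIV T z) < e"
  proof eventually_elim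
    case (elim n)
    have "fin_rank_orth_proj J (P n)"
      using assms(5) by (simp add: filtration_def)
    then have "dist (jfun J (range (P n)) (\<lambda>h. P n (T h)) z) (jfun J UNIV T z)
        \<le> max (onorm (\<lambda>x. T (P n x) - P n (T (P n x)))) (e / 2)" for z
      using T by (rule dist_jfun_compression_le) (use elim(2) in blast)
    moreover have "max (onorm (\<lambda>x. T (P n x) - P n (T (P n x)))) (e / 2) < e"
      using elim(1) \<open>e > 0\<close> by simp
    ultimately show ?case
      using le_less_trans by blast
  qed
qed

end
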